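(* Let $n\ge2$ and $D=\mathrm{pdiag}(d_1,\dots,d_n)$ with $d_1\le\dots\le d_n$. If $n=2$ and $d_2<0$, then $\mathrm{attr}(D)=\{x\in\overline{\mathbb{R}}^2: x_1=x_2\}$, so $D$ is not strongly stable. In all other cases $D$ is strongly stable.
   Context: Max-plus conventions: $\overline{\mathbb{R}}=\mathbb{R}\cup\{-\infty\}$, $\varepsilon=-\infty$, $\oplus=\max$, $\otimes=+$; $(A\otimes x)_i=\max_j(A_{ij}+x_j)$, $(\lambda\otimes x)_i=\lambda+x_i$, $A^k$ is the $k$-fold max-plus power and $A^0\otimes x=x$. $\mathrm{pdiag}(d_1,\dots,d_n)$ is the matrix with real diagonal entries $d_i$ and all off-diagonal entries equal to the real number $0$. For finite $A\in\mathbb{R}^{n\times n}$, $\lambda(A)$ is the maximum cycle mean, $\lambda(A)=\max\{(a_{i_1i_2}+\dots+a_{i_ki_1})/k\}$ over $k\ge1$ and distinct $i_1,\dots,i_k\in[n]$; it is the unique max-plus eigenvalue of $A$. The eigenspace is $V(A)=\{x\in\overline{\mathbb{R}}^n: A\otimes x=\lambda(A)\otimes x\}$ (including the all-$\varepsilon$ vector). $\mathrm{attr}(A)=\{x\in\overline{\mathbb{R}}^n: A^k\otimes x\in V(A)\text{ for some } k\ge0\}$; $A$ is strongly stable if $\mathrm{attr}(A)=\overline{\mathbb{R}}^n$. *)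

theory Defs
  imports Complex_Main "HOL-Library.Extended_Real"
begin

text \<open>Max-plus algebra over \<open>R \<union> {-\<infinity>}\<close>, modelled inside \<open>ereal\<close> (the value \<open>\<infinity>\<close> never
  occurs).  Dimension \<open>n\<close> is explicit; indices are \<open>0..<n\<close> (paper index \<open>i\<close> is \<open>i-1\<close> here).
  A vector of \<open>Rbar^n\<close> is a function \<open>nat \<Rightarrow> ereal\<close> with values \<noteq> \<infinity> on \<open>{..<n}\<close>
  and value \<open>-\<infinity>\<close> outside \<open>{..<n}\<close> (extensional convention).\<close>

definition mp_vecs :: "nat \<Rightarrow> (nat \<Rightarrow> ereal) set" where
  "mp_vecs n = {x. (\<forall>i<n. x i \<noteq> \<infinity>) \<and> (\<forall>i. n \<le> i \<longrightarrow> x i = -\<infinity>)}"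

definition mp_mat_mult :: "nat \<Rightarrow> (nat \<Rightarrow> nat \<Rightarrow> ereal) \<Rightarrow> (nat \<Rightarrow> nat \<Rightarrow> ereal) \<Rightarrow> nat \<Rightarrow> nat \<Rightarrow> ereal" where
  "mp_mat_mult n A B = (\<lambda>i j. if i < n \<and> j < n then Max ((\<lambda>l. A i l + B l j) ` {..<n}) else -\<infinity>)"

definition mp_id :: "nat \<Rightarrow> nat \<Rightarrow> nat \<Rightarrow> ereal" where
  "mp_id n = (\<lambda>i j. if i < n \<and> j < n then (if i = j then 0 else -\<infinity>) else -\<infinity>)"

definition mp_of_real :: "nat \<Rightarrow> (nat \<Rightarrow> nat \<Rightarrow> real) \<Rightarrow> nat \<Rightarrow> nat \<Rightarrow> ereal" where
  "mp_of_real n A = (\<lambda>i j. if i < n \<and> j < n then ereal (A i j) else -\<infinity>)"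

fun mp_mat_pow :: "nat \<Rightarrow> (nat \<Rightarrow> nat \<Rightarrow> real) \<Rightarrow> nat \<Rightarrow> nat \<Rightarrow> nat \<Rightarrow> ereal" where
  "mp_mat_pow n A 0 = mp_id n"
| "mp_mat_pow n A (Suc k) = mp_mat_mult n (mp_of_real n A) (mp_mat_pow n A k)"

definition mp_apply :: "nat \<Rightarrow> (nat \<Rightarrow> nat \<Rightarrow> ereal) \<Rightarrow> (nat \<Rightarrow> ereal) \<Rightarrow> nat \<Rightarrow> ereal" where
  "mp_apply n A x = (\<lambda>i. if i < n then Max ((\<lambda>j. A i j + x j) ` {..<n}) else -\<infinity>)"

definition mp_scale :: "nat \<Rightarrow> real \<Rightarrow> (nat \<Rightarrow> ereal) \<Rightarrow> nat \<Rightarrow> ereal" where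
  "mp_scale n c x = (\<lambda>i. if i < n then ereal c + x i else -\<infinity>)"

definition cycle_mean :: "(nat \<Rightarrow> nat \<Rightarrow> real) \<Rightarrow> nat list \<Rightarrow> real" where
  "cycle_mean A cs = (\<Sum>t<length cs. A (cs ! t) (cs ! ((t + 1) mod length cs))) / real (length cs)"

definition mcm :: "nat \<Rightarrow> (nat \<Rightarrow> nat \<Rightarrow> real) \<Rightarrow> real" where
  "mcm n A = Max {cycle_mean A cs | cs. cs \<noteq> [] \<and> distinct cs \<and> set cs \<subseteq> {..<n}}"

definition eigenspace :: "nat \<Rightarrow> (nat \<Rightarrow> nat \<Rightarrow> real) \<Rightarrow> (nat \<Rightarrow> ereal) set" where
  "eigenspace n A = {x \<in> mp_vecs n. mp_apply n (mp_of_real n A) x = mp_scale n (mcm n A) x}"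

definition attr :: "nat \<Rightarrow> (nat \<Rightarrow> nat \<Rightarrow> real) \<Rightarrow> (nat \<Rightarrow> ereal) set" where
  "attr n A = {x \<in> mp_vecs n. \<exists>k. mp_apply n (mp_mat_pow n A k) x \<in> eigenspace n A}"

definition strongly_stable :: "nat \<Rightarrow> (nat \<Rightarrow> nat \<Rightarrow> real) \<Rightarrow> bool" where
  "strongly_stable n A \<longleftrightarrow> attr n A = mp_vecs n"

definition pdiag :: "(nat \<Rightarrow> real) \<Rightarrow> nat \<Rightarrow> nat \<Rightarrow> real" where
  "pdiag d = (\<lambda>i j. if i = j then d i else 0)"

end

theory Submission
  imports Defs
begin

text \<open>A real matrix sends every vector with a finite coordinate to a finite vector, so it
  suffices to follow the real dynamics \<open>y \<mapsto> D \<otimes> y\<close>, whose \<open>i\<close>-th coordinate is the larger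
  of \<open>d\<^sub>i + y\<^sub>i\<close> and the other coordinates of \<open>y\<close>; moreover \<open>\<lambda>(D) = max d\<^sub>n 0\<close>.
  If \<open>d\<^sub>n < 0\<close> and \<open>n \<ge> 3\<close>, two steps make \<open>y\<close> constant, and constants are eigenvectors.
  If \<open>L = d\<^sub>n \<ge> 0\<close>, pick \<open>m\<close> with \<open>d\<^sub>m = L\<close> maximising \<open>y\<close> among such indices: the excess
  \<open>max y - y\<^sub>m\<close> drops by a fixed \<open>\<delta> > 0\<close> per step until \<open>y\<^sub>m\<close> is maximal; from then on
  \<open>y\<^sub>m\<close> grows by \<open>L\<close> per step while every coordinate with \<open>d\<^sub>i < L\<close> eventually sits at
  \<open>y\<^sub>m - L\<close>, which is an eigenvector.  For \<open>n = 2\<close> and \<open>d\<^sub>2 < 0\<close> the eigenspace is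
  \<open>{x\<^sub>1 = x\<^sub>2}\<close>, and \<open>D\<close> preserves \<open>x\<^sub>1 \<noteq> x\<^sub>2\<close>.\<close>

lemma Max_image_Max_swap:
  fixes g :: "'a \<Rightarrow> 'b \<Rightarrow> 'c::linorder"
  assumes "finite I" "I \<noteq> {}" "finite J" "J \<noteq> {}"
  shows "Max ((\<lambda>i. Max (g i ` J)) ` I) = Max ((\<lambda>j. Max ((\<lambda>i. g i j) ` I)) ` J)"
proof -
  have "g i j \<le> Max ((\<lambda>j. Max ((\<lambda>i. g i j) ` I)) ` J)"
    and "g i j \<le> Max ((\<lambda>i. Max (g i ` J)) ` I)" if "i \<in> I" "j \<in> J" for i j
    using assms that by (auto simp: Max_ge_iff)
  then show ?thesis
    using assms by (intro antisym) (auto simp: Max_le_iff)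
qed

lemma Max_add_ereal:
  fixes a :: ereal
  assumes "finite S" "S \<noteq> {}"
  shows "Max (f ` S) + a = (MAX x\<in>S. f x + a)"
proof -
  have "Max (f ` S) + a = Max ((\<lambda>s. s + a) ` f ` S)"
    using assms by (intro mono_Max_commute) (auto simp: mono_def add_right_mono)
  then show ?thesis by (simp add: image_image)
qed

lemma add_Max_ereal:
  fixes a :: ereal
  assumes "finite S" "S \<noteq> {}"
  shows "a + Max (f ` S) = (MAX x\<in>S. a + f x)"
  using Max_add_ereal[OF assms] by (simp add: add.commute)

lemma mp_apply_mp_mat_mult:
  assumes "0 < n"
  shows "mp_apply n (mp_mat_mult n A B) x = mp_apply n A (mp_apply n B x)"
proof
  fix i
  have ne: "{..<n} \<noteq> {}" using assms by auto
  show "mp_apply n (mp_mat_mult n A B) x i = mp_apply n A (mp_apply n B x) i"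
  proof (cases "i < n")
    case True
    have "mp_apply n (mp_mat_mult n A B) x i
        = Max ((\<lambda>j. Max ((\<lambda>l. A i l + B l j + x j) ` {..<n})) ` {..<n})"
      using True ne by (simp add: mp_apply_def mp_mat_mult_def Max_add_ereal)
    also have "\<dots> = Max ((\<lambda>l. Max ((\<lambda>j. A i l + B l j + x j) ` {..<n})) ` {..<n})"
      using Max_image_Max_swap[of "{..<n}" "{..<n}" "\<lambda>l j. A i l + B l j + x j"] ne by simp
    also have "\<dots> = mp_apply n A (mp_apply n B x) i"
      using True ne by (simp add: mp_apply_def add_Max_ereal add.assoc)
    finally show ?thesis .
  qed (simp add: mp_apply_def)
qed

lemma mp_apply_mp_id:
  assumes "x \<in> mp_vecs n"
  shows "mp_apply n (mp_id n) x = x"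
proof
  fix i
  show "mp_apply n (mp_id n) x i = x i"
  proof (cases "i < n")
    case True
    have "Max ((\<lambda>j. mp_id n i j + x j) ` {..<n}) = x i"
    proof (rule Max_eqI)
      fix y assume "y \<in> (\<lambda>j. mp_id n i j + x j) ` {..<n}"
      then obtain j where j: "j < n" "y = mp_id n i j + x j" by blast
      moreover have "x j \<noteq> \<infinity>" using assms j(1) by (simp add: mp_vecs_def)
      ultimately show "y \<le> x i"
        by (cases "i = j"; cases "x j") (simp_all add: mp_id_def)
    next
      show "x i \<in> (\<lambda>j. mp_id n i j + x j) ` {..<n}"
        using True by (auto simp: mp_id_def intro!: image_eqI[of _ _ i])
    qed simp
    then show ?thesis using True by (simp add: mp_apply_def)
  qed (use assms in \<open>simp add: mp_apply_def mp_vecs_def\<close>)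
qed

lemma mp_apply_mp_mat_pow:
  assumes "0 < n" "x \<in> mp_vecs n"
  shows "mp_apply n (mp_mat_pow n A k) x = (mp_apply n (mp_of_real n A) ^^ k) x"
  by (induction k) (simp_all add: assms mp_apply_mp_id mp_apply_mp_mat_mult)

lemma finite_cycle_means:
  "finite {cycle_mean A cs | cs. cs \<noteq> [] \<and> distinct cs \<and> set cs \<subseteq> {..<n}}"
proof -
  have "{cycle_mean A cs | cs. cs \<noteq> [] \<and> distinct cs \<and> set cs \<subseteq> {..<n}}
      \<subseteq> cycle_mean A ` {cs. set cs \<subseteq> {..<n} \<and> length cs \<le> n}"
  proof (clarify)
    fix cs :: "nat list" assume cs: "distinct cs" "set cs \<subseteq> {..<n}"
    then have "length cs \<le> n"
      using distinct_card[OF cs(1)] card_mono[OF _ cs(2)] by simp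
    with cs show "cycle_mean A cs \<in> cycle_mean A ` {cs. set cs \<subseteq> {..<n} \<and> length cs \<le> n}"
      by blast
  qed
  moreover have "finite {cs. set cs \<subseteq> {..<n} \<and> length cs \<le> n}"
    by (rule finite_lists_length_le) simp
  ultimately show ?thesis by (rule finite_surj[rotated])
qed

lemma cycle_mean_pdiag_le:
  assumes "cs \<noteq> []" "distinct cs" "set cs \<subseteq> {..<n}"
  shows "cycle_mean (pdiag d) cs \<le> max (Max (d ` {..<n})) 0"
proof (cases "length cs = 1")
  case True
  then obtain a where a: "cs = [a]" by (cases cs) auto
  with assms have "d a \<le> Max (d ` {..<n})" by auto
  with a show ?thesis by (simp add: cycle_mean_def pdiag_def)
next
  case False
  with assms(1) have len: "2 \<le> length cs" by (cases cs) (auto simp: Suc_le_eq)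
  \<comment> \<open>on a cycle of length at least two only off-diagonal entries, all equal to 0, occur\<close>
  have "cs ! t \<noteq> cs ! ((t + 1) mod length cs)" if "t < length cs" for t
  proof -
    have "t \<noteq> (t + 1) mod length cs"
    proof (cases "t + 1 < length cs")
      case False
      with that have "t + 1 = length cs" by simp
      with len show ?thesis by simp
    qed simp
    moreover have "(t + 1) mod length cs < length cs" using len by (intro mod_less_divisor) linarith
    ultimately show ?thesis
      using nth_eq_iff_index_eq[OF assms(2) that, of "(t + 1) mod length cs"] len by simp
  qed
  then have "cycle_mean (pdiag d) cs = 0" by (simp add: cycle_mean_def pdiag_def)
  then show ?thesis by simp
qed

lemma mcm_pdiag:
  assumes "2 \<le> n"
  shows "mcm n (pdiag d) = max (Max (d ` {..<n})) 0"
proof -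
  let ?C = "{cycle_mean (pdiag d) cs | cs. cs \<noteq> [] \<and> distinct cs \<and> set cs \<subseteq> {..<n}}"
  have "Max (d ` {..<n}) \<in> d ` {..<n}"
    using assms by (intro Max_in) (auto simp: lessThan_empty_iff)
  then obtain i where i: "i < n" "d i = Max (d ` {..<n})" by auto
  have "cycle_mean (pdiag d) [i] \<in> ?C"
    by (rule CollectI, rule exI[of _ "[i]"]) (use i in simp)
  moreover have "cycle_mean (pdiag d) [0, 1] \<in> ?C"
    by (rule CollectI, rule exI[of _ "[0, 1]"]) (use assms in auto)
  moreover have "cycle_mean (pdiag d) [i] = Max (d ` {..<n})" "cycle_mean (pdiag d) [0, 1] = 0"
    using i by (simp_all add: cycle_mean_def pdiag_def)
  ultimately have "max (Max (d ` {..<n})) 0 \<in> ?C"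
    by (simp add: max_def)
  moreover have "c \<le> max (Max (d ` {..<n})) 0" if "c \<in> ?C" for c
    using that cycle_mean_pdiag_le by blast
  ultimately show ?thesis
    unfolding mcm_def by (intro Max_eqI finite_cycle_means)
qed

definition ereal_vec :: "nat \<Rightarrow> (nat \<Rightarrow> real) \<Rightarrow> nat \<Rightarrow> ereal" where
  "ereal_vec n y = (\<lambda>i. if i < n then ereal (y i) else -\<infinity>)"

definition mp_apply_real :: "nat \<Rightarrow> (nat \<Rightarrow> nat \<Rightarrow> real) \<Rightarrow> (nat \<Rightarrow> real) \<Rightarrow> nat \<Rightarrow> real" where
  "mp_apply_real n A y i = Max ((\<lambda>j. A i j + y j) ` {..<n})"

lemma ereal_vec_in_mp_vecs: "ereal_vec n y \<in> mp_vecs n"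
  by (simp add: ereal_vec_def mp_vecs_def)

lemma ereal_vec_eq_iff: "ereal_vec n u = ereal_vec n v \<longleftrightarrow> (\<forall>i<n. u i = v i)"
  by (auto simp: ereal_vec_def fun_eq_iff)

lemma mp_apply_ereal_vec:
  "mp_apply n (mp_of_real n A) (ereal_vec n y) = ereal_vec n (mp_apply_real n A y)"
proof
  fix i
  show "mp_apply n (mp_of_real n A) (ereal_vec n y) i = ereal_vec n (mp_apply_real n A y) i"
  proof (cases "i < n")
    case True
    have "(\<lambda>j. mp_of_real n A i j + ereal_vec n y j) ` {..<n} = ereal ` (\<lambda>j. A i j + y j) ` {..<n}"
      unfolding image_image using True by (intro image_cong) (simp_all add: mp_of_real_def ereal_vec_def)
    then have "mp_apply n (mp_of_real n A) (ereal_vec n y) i = Max (ereal ` (\<lambda>j. A i j + y j) ` {..<n})"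
      using True by (simp add: mp_apply_def)
    also have "\<dots> = ereal (mp_apply_real n A y i)"
      using True unfolding mp_apply_real_def
      by (intro mono_Max_commute[symmetric]) (auto simp: mono_def)
    finally show ?thesis
      using True by (simp add: ereal_vec_def)
  qed (simp add: mp_apply_def ereal_vec_def)
qed

lemma funpow_mp_apply_ereal_vec:
  "(mp_apply n (mp_of_real n A) ^^ k) (ereal_vec n y) = ereal_vec n ((mp_apply_real n A ^^ k) y)"
  by (induction k) (simp_all add: mp_apply_ereal_vec)

lemma ereal_vec_in_eigenspace_iff:
  "ereal_vec n y \<in> eigenspace n A \<longleftrightarrow> (\<forall>i<n. mp_apply_real n A y i = mcm n A + y i)"
proof -
  have "mp_scale n (mcm n A) (ereal_vec n y) = ereal_vec n (\<lambda>i. mcm n A + y i)"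
    by (auto simp: mp_scale_def ereal_vec_def)
  then show ?thesis
    by (simp add: eigenspace_def ereal_vec_in_mp_vecs mp_apply_ereal_vec ereal_vec_eq_iff)
qed

lemma eps_vec_in_eigenspace:
  assumes "x \<in> mp_vecs n" "\<forall>i<n. x i = -\<infinity>"
  shows "x \<in> eigenspace n A"
proof -
  have x: "x = (\<lambda>_. -\<infinity>)"
  proof
    fix i
    show "x i = -\<infinity>"
      using assms by (cases "i < n") (simp_all add: mp_vecs_def)
  qed
  have "(\<lambda>j. mp_of_real n A i j + -\<infinity>) ` {..<n} = {-\<infinity>}" if "i < n" for i
    using that by (auto simp: mp_of_real_def)
  then have "mp_apply n (mp_of_real n A) (\<lambda>_. -\<infinity>) = (\<lambda>_. -\<infinity>)"
    by (simp add: mp_apply_def fun_eq_iff)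
  then show ?thesis
    using assms(1) unfolding x by (simp add: eigenspace_def mp_scale_def fun_eq_iff)
qed

lemma mp_apply_of_real_finite:
  assumes "x \<in> mp_vecs n" "p < n" "x p \<noteq> -\<infinity>"
  shows "\<exists>y. mp_apply n (mp_of_real n A) x = ereal_vec n y"
proof -
  let ?T = "mp_apply n (mp_of_real n A) x"
  have "\<bar>?T i\<bar> \<noteq> \<infinity>" if i: "i < n" for i
  proof -
    let ?S = "(\<lambda>j. mp_of_real n A i j + x j) ` {..<n}"
    have S: "finite ?S" "?S \<noteq> {}" using i by auto
    have "ereal (A i p) + x p \<le> Max ?S"
      using S assms(2) i by (intro Max_ge) (auto simp: mp_of_real_def)
    moreover have "ereal (A i p) + x p \<noteq> -\<infinity>"
      using assms by (auto simp: mp_vecs_def)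
    moreover have "Max ?S \<noteq> \<infinity>"
      using Max_in[OF S] assms(1) i by (auto simp: mp_of_real_def mp_vecs_def)
    ultimately show ?thesis
      using i by (auto simp: mp_apply_def)
  qed
  then have "?T = ereal_vec n (\<lambda>i. real_of_ereal (?T i))"
    unfolding ereal_vec_def fun_eq_iff by (simp add: mp_apply_def ereal_real')
  then show ?thesis by blast
qed

lemma strongly_stableI:
  assumes "0 < n"
    and "\<And>y. \<exists>k. \<forall>i<n. mp_apply_real n A ((mp_apply_real n A ^^ k) y) i
                        = mcm n A + (mp_apply_real n A ^^ k) y i"
  shows "strongly_stable n A"
proof -
  have "\<exists>k. mp_apply n (mp_mat_pow n A k) x \<in> eigenspace n A" if x: "x \<in> mp_vecs n" for x
  proof (cases "\<forall>i<n. x i = -\<infinity>")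
    case True
    then show ?thesis
      using eps_vec_in_eigenspace[OF x] mp_apply_mp_mat_pow[OF assms(1) x, of A 0]
      by (intro exI[of _ 0]) simp
  next
    case False
    then obtain y where y: "mp_apply n (mp_of_real n A) x = ereal_vec n y"
      using mp_apply_of_real_finite[OF x] by auto
    obtain k where k: "\<forall>i<n. mp_apply_real n A ((mp_apply_real n A ^^ k) y) i
                             = mcm n A + (mp_apply_real n A ^^ k) y i"
      using assms(2) by blast
    have "mp_apply n (mp_mat_pow n A (Suc k)) x = ereal_vec n ((mp_apply_real n A ^^ k) y)"
      by (simp only: mp_apply_mp_mat_pow[OF assms(1) x] funpow_Suc_right o_apply y
          funpow_mp_apply_ereal_vec)
    then show ?thesis
      using k by (intro exI[of _ "Suc k"]) (simp add: ereal_vec_in_eigenspace_iff)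
  qed
  then show ?thesis
    by (auto simp: strongly_stable_def attr_def)
qed

abbreviation pdiag_apply :: "nat \<Rightarrow> (nat \<Rightarrow> real) \<Rightarrow> (nat \<Rightarrow> real) \<Rightarrow> nat \<Rightarrow> real" where
  "pdiag_apply n d \<equiv> mp_apply_real n (pdiag d)"

lemma pdiag_apply_ge_diag: "i < n \<Longrightarrow> d i + y i \<le> pdiag_apply n d y i"
  unfolding mp_apply_real_def by (rule Max_ge) (auto simp: pdiag_def intro!: image_eqI[of _ _ i])

lemma pdiag_apply_ge_off: "j < n \<Longrightarrow> j \<noteq> i \<Longrightarrow> y j \<le> pdiag_apply n d y i"
  unfolding mp_apply_real_def by (rule Max_ge) (auto simp: pdiag_def intro!: image_eqI[of _ _ j])

lemma pdiag_apply_le: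
  assumes "i < n" "d i + y i \<le> c" "\<And>j. j < n \<Longrightarrow> j \<noteq> i \<Longrightarrow> y j \<le> c"
  shows "pdiag_apply n d y i \<le> c"
  unfolding mp_apply_real_def using assms by (subst Max_le_iff) (auto simp: pdiag_def)

lemma pdiag_apply_eqI:
  assumes "i < n" "d i + y i \<le> c" "\<And>j. j < n \<Longrightarrow> j \<noteq> i \<Longrightarrow> y j \<le> c"
    and "d i + y i = c \<or> (\<exists>j<n. j \<noteq> i \<and> y j = c)"
  shows "pdiag_apply n d y i = c"
proof -
  have "c \<le> pdiag_apply n d y i"
    using assms(4) pdiag_apply_ge_diag[OF assms(1)] pdiag_apply_ge_off[of _ n i] by auto
  moreover have "pdiag_apply n d y i \<le> c"
    using assms(1-3) by (rule pdiag_apply_le)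
  ultimately show ?thesis by simp
qed

lemma pdiag_apply_le_max:
  assumes "m < n" "0 \<le> d m" "i < n"
  shows "pdiag_apply n d y i \<le> max (d i + y i) (pdiag_apply n d y m)"
proof (rule pdiag_apply_le[OF assms(3)])
  fix j assume "j < n" "j \<noteq> i"
  have "y j \<le> pdiag_apply n d y m"
  proof (cases "j = m")
    case True
    then show ?thesis using pdiag_apply_ge_diag[OF assms(1), of d y] assms(2) by simp
  qed (use pdiag_apply_ge_off \<open>j < n\<close> in blast)
  then show "y j \<le> max (d i + y i) (pdiag_apply n d y m)" by simp
qed simp

lemma pdiag_apply_const:
  assumes "2 \<le> n" "\<And>i. i < n \<Longrightarrow> d i \<le> 0" "\<And>i. i < n \<Longrightarrow> y i = c" "i < n"
  shows "pdiag_apply n d y i = c"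
proof (rule pdiag_apply_eqI[OF assms(4)])
  have "(if i = 0 then 1 else 0) < n" "(if i = 0 then 1 else 0) \<noteq> i"
    using assms(1) by auto
  then show "d i + y i = c \<or> (\<exists>j<n. j \<noteq> i \<and> y j = c)"
    using assms(3) by blast
qed (use assms in auto)

text \<open>One step makes every coordinate except an argmax of \<open>y\<close> equal to \<open>max y\<close>; as \<open>n \<ge> 3\<close>,
  at the next step every coordinate sees such a coordinate off the diagonal.\<close>
lemma pdiag_apply_twice_const:
  assumes "3 \<le> n" "\<And>i. i < n \<Longrightarrow> d i \<le> 0"
  shows "\<exists>c. \<forall>i<n. pdiag_apply n d (pdiag_apply n d y) i = c"
proof -
  let ?M = "Max (y ` {..<n})"
  have "?M \<in> y ` {..<n}" using assms(1) by (intro Max_in) (auto simp: lessThan_empty_iff)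
  then obtain p where p: "p < n" "y p = ?M" by auto
  have y_le: "y j \<le> ?M" if "j < n" for j using that by simp
  let ?z = "pdiag_apply n d y"
  have z_le: "?z i \<le> ?M" if "i < n" for i
  proof (rule pdiag_apply_le[OF that])
    show "d i + y i \<le> ?M" using y_le[OF that] assms(2)[OF that] by simp
  qed (use y_le in auto)
  have z_eq: "?z i = ?M" if "i < n" "i \<noteq> p" for i
    using z_le[OF that(1)] pdiag_apply_ge_off[OF p(1), of i y d] that p by simp
  have "pdiag_apply n d ?z i = ?M" if i: "i < n" for i
  proof (rule pdiag_apply_eqI[OF i])
    show "d i + ?z i \<le> ?M" using z_le[OF i] assms(2)[OF i] by simp
    show "?z j \<le> ?M" if "j < n" for j using z_le[OF that] .
    have "\<exists>j\<in>{0, 1, 2}. j \<noteq> i \<and> j \<noteq> p" by auto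
    moreover have "{0, 1, 2} \<subseteq> {..<n}" using assms(1) by auto
    ultimately obtain j where "j < n" "j \<noteq> i" "j \<noteq> p" by blast
    then show "d i + ?z i = ?M \<or> (\<exists>j<n. j \<noteq> i \<and> ?z j = ?M)"
      using z_eq by blast
  qed
  then show ?thesis by blast
qed

lemma pdiag_eventually_eigen_nonpos:
  assumes "3 \<le> n" "\<And>i. i < n \<Longrightarrow> d i \<le> 0"
  shows "\<exists>k. \<forall>i<n. pdiag_apply n d ((pdiag_apply n d ^^ k) y) i
                    = mcm n (pdiag d) + (pdiag_apply n d ^^ k) y i"
proof -
  have "Max (d ` {..<n}) \<le> 0"
    using assms by (subst Max_le_iff) (auto simp: lessThan_empty_iff)
  then have mcm: "mcm n (pdiag d) = 0"
    using assms(1) by (simp add: mcm_pdiag)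
  obtain c where c: "\<forall>i<n. (pdiag_apply n d ^^ 2) y i = c"
    using pdiag_apply_twice_const[of n d y] assms by (auto simp: numeral_2_eq_2)
  have "pdiag_apply n d ((pdiag_apply n d ^^ 2) y) i = c" if "i < n" for i
    using assms(1) assms(2) c that by (intro pdiag_apply_const) auto
  then show ?thesis
    using c mcm by (intro exI[of _ 2]) simp
qed

lemma finite_pos_lower_bound:
  fixes A :: "real set"
  assumes "finite A"
  shows "\<exists>\<delta>>0. \<forall>a\<in>A. 0 < a \<longrightarrow> \<delta> \<le> a"
proof (intro exI conjI)
  let ?\<delta> = "Min (insert 1 {a \<in> A. 0 < a})"
  show "0 < ?\<delta>" using assms by (subst Min_gr_iff) auto
  show "\<forall>a\<in>A. 0 < a \<longrightarrow> ?\<delta> \<le> a" using assms by (auto intro: Min_le)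
qed

context
  fixes n :: nat and d :: "nat \<Rightarrow> real" and L :: real
  assumes L_nonneg: "0 \<le> L" and d_le_L: "\<And>i. i < n \<Longrightarrow> d i \<le> L"
begin

lemma pdiag_gap_bound: "\<exists>\<delta>>0. \<forall>i<n. d i < L \<longrightarrow> \<delta> \<le> L - d i"
  using finite_pos_lower_bound[of "(\<lambda>i. L - d i) ` {..<n}"] by auto

text \<open>Let \<open>m\<close> carry a maximal diagonal entry \<open>L \<ge> 0\<close> and maximise \<open>z\<close> among such indices.
  Then each step lowers the excess \<open>max z - z m\<close> by \<open>\<delta>\<close> until it vanishes, as only the
  diagonal terms \<open>d i + z i\<close> with \<open>d i \<le> L - \<delta>\<close> can exceed the new value at \<open>m\<close>.\<close>
lemma pdiag_apply_excess:
  assumes m: "m < n" "d m = L"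
    and \<delta>: "\<forall>i<n. d i < L \<longrightarrow> \<delta> \<le> L - d i"
    and top: "\<forall>i<n. d i = L \<longrightarrow> z i \<le> z m"
    and excess: "\<forall>j<n. z j \<le> z m + g"
  shows "(\<forall>i<n. d i = L \<longrightarrow> pdiag_apply n d z i \<le> pdiag_apply n d z m)
       \<and> (\<forall>j<n. pdiag_apply n d z j \<le> pdiag_apply n d z m + max 0 (g - \<delta>))"
proof -
  have at_m: "L + z m \<le> pdiag_apply n d z m"
    using pdiag_apply_ge_diag[OF m(1)] m(2) by metis
  have le_max: "pdiag_apply n d z i \<le> max (d i + z i) (pdiag_apply n d z m)" if "i < n" for i
    using pdiag_apply_le_max[OF m(1) _ that] m(2) L_nonneg by simp
  have "pdiag_apply n d z i \<le> pdiag_apply n d z m" if "i < n" "d i = L" for i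
    using le_max[OF that(1)] top at_m that by auto
  moreover have "pdiag_apply n d z i \<le> pdiag_apply n d z m + max 0 (g - \<delta>)" if "i < n" for i
  proof (cases "d i = L")
    case True
    then show ?thesis using le_max[OF that] top at_m that by auto
  next
    case False
    then have "d i + z i \<le> L + z m + (g - \<delta>)"
      using \<delta> excess d_le_L[OF that] that by force
    then show ?thesis using le_max[OF that] at_m by linarith
  qed
  ultimately show ?thesis by blast
qed

lemma pdiag_funpow_excess:
  assumes m: "m < n" "d m = L"
    and \<delta>: "0 < \<delta>" "\<forall>i<n. d i < L \<longrightarrow> \<delta> \<le> L - d i"
    and top: "\<forall>i<n. d i = L \<longrightarrow> z i \<le> z m"
    and excess: "\<forall>j<n. z j \<le> z m + g"
  shows "(\<forall>i<n. d i = L \<longrightarrow> (pdiag_apply n d ^^ k) z i \<le> (pdiag_apply n d ^^ k) z m)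
       \<and> (\<forall>j<n. (pdiag_apply n d ^^ k) z j \<le> (pdiag_apply n d ^^ k) z m + max 0 (g - k * \<delta>))"
proof (induction k)
  case 0
  have "z j \<le> z m + max 0 g" if "j < n" for j
    using excess that by (smt (verit, best))
  then show ?case using top by simp
next
  case (Suc k)
  have "max 0 (max 0 (g - k * \<delta>) - \<delta>) = max 0 (g - Suc k * \<delta>)"
    using \<delta>(1) by (simp add: algebra_simps max_def)
  then show ?case
    using pdiag_apply_excess[OF m \<delta>(2), of "(pdiag_apply n d ^^ k) z" "max 0 (g - k * \<delta>)"] Suc
    by simp
qed

lemma pdiag_eventually_top:
  assumes m: "m < n" "d m = L"
    and top: "\<forall>i<n. d i = L \<longrightarrow> z i \<le> z m"
  shows "\<exists>k. \<forall>j<n. (pdiag_apply n d ^^ k) z j \<le> (pdiag_apply n d ^^ k) z m"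
proof -
  obtain \<delta> where \<delta>: "0 < \<delta>" "\<forall>i<n. d i < L \<longrightarrow> \<delta> \<le> L - d i"
    using pdiag_gap_bound by blast
  define g where "g = (\<Sum>j<n. \<bar>z j - z m\<bar>)"
  have "\<bar>z j - z m\<bar> \<le> g" if "j < n" for j
    unfolding g_def using that by (intro member_le_sum) auto
  then have excess: "\<forall>j<n. z j \<le> z m + g" by force
  obtain k :: nat where "g / \<delta> \<le> k" using real_arch_simple by blast
  then have "max 0 (g - k * \<delta>) = 0" using \<delta>(1) by (simp add: field_simps)
  then show ?thesis
    using pdiag_funpow_excess[OF m \<delta> top excess, of k] by auto
qed

lemma pdiag_apply_at_top:
  assumes m: "m < n" "d m = L" and top: "\<forall>j<n. w j \<le> w m"
  shows "pdiag_apply n d w m = L + w m"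
    and "i < n \<Longrightarrow> i \<noteq> m \<Longrightarrow> pdiag_apply n d w i = max (d i + w i) (w m)"
  using assms L_nonneg d_le_L by (auto intro!: pdiag_apply_eqI simp: max_def)

lemma pdiag_funpow_at_top:
  assumes m: "m < n" "d m = L" and top: "\<forall>j<n. w j \<le> w m"
  shows "(\<forall>j<n. (pdiag_apply n d ^^ k) w j \<le> (pdiag_apply n d ^^ k) w m)
       \<and> (pdiag_apply n d ^^ k) w m = w m + k * L"
proof (induction k)
  case (Suc k)
  let ?w = "(pdiag_apply n d ^^ k) w"
  have "pdiag_apply n d ?w j \<le> pdiag_apply n d ?w m" if "j < n" for j
  proof (cases "j = m")
    case False
    have "d j + ?w j \<le> L + ?w m" using d_le_L[OF that] Suc that by (intro add_mono) auto
    then show ?thesis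
      using pdiag_apply_at_top[OF m, of ?w] Suc that False L_nonneg by auto
  qed simp
  then show ?case
    using pdiag_apply_at_top(1)[OF m conjunct1[OF Suc]] Suc by (simp add: algebra_simps)
qed (use top in simp)

lemma pdiag_funpow_at_top_off:
  assumes m: "m < n" "d m = L" and top: "\<forall>j<n. w j \<le> w m"
    and i: "i < n" "i \<noteq> m"
  shows "(pdiag_apply n d ^^ Suc k) w i = max (w i + (k + 1) * d i) (w m + k * L)"
proof (induction k)
  case 0
  then show ?case using pdiag_apply_at_top(2)[OF m top i] by (simp add: add.commute)
next
  case (Suc k)
  let ?w = "(pdiag_apply n d ^^ Suc k) w"
  have "(pdiag_apply n d ^^ Suc (Suc k)) w i = pdiag_apply n d ?w i"
    by (simp only: funpow.simps(2) o_apply)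
  also have "\<dots> = max (d i + ?w i) (?w m)"
    by (rule pdiag_apply_at_top(2)[OF m conjunct1[OF pdiag_funpow_at_top[OF m top]] i])
  also have "\<dots> = max (w i + (real (Suc k) + 1) * d i) (w m + Suc k * L)"
    using Suc pdiag_funpow_at_top[OF m top, of "Suc k"] d_le_L[OF i(1)]
    by (simp add: algebra_simps max_def)
  finally show ?case .
qed

lemma pdiag_eventually_eigen_from_top:
  assumes m: "m < n" "d m = L" and top: "\<forall>j<n. w j \<le> w m"
  shows "\<exists>k. \<forall>i<n. pdiag_apply n d ((pdiag_apply n d ^^ k) w) i = L + (pdiag_apply n d ^^ k) w i"
proof -
  obtain \<delta> where \<delta>: "0 < \<delta>" "\<forall>i<n. d i < L \<longrightarrow> \<delta> \<le> L - d i"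
    using pdiag_gap_bound by blast
  obtain j :: nat where "L / \<delta> \<le> j" using real_arch_simple by blast
  then have jL: "L \<le> j * \<delta>" using \<delta>(1) by (simp add: field_simps)
  have "pdiag_apply n d ((pdiag_apply n d ^^ Suc j) w) i = L + (pdiag_apply n d ^^ Suc j) w i"
    if i: "i < n" for i
  proof (cases "i = m")
    case True
    then show ?thesis
      using pdiag_funpow_at_top[OF m top, of "Suc j"] pdiag_funpow_at_top[OF m top, of "Suc (Suc j)"]
      by (simp add: algebra_simps)
  next
    case False
    have off: "(pdiag_apply n d ^^ Suc j) w i = max (w i + (j + 1) * d i) (w m + j * L)"
      "pdiag_apply n d ((pdiag_apply n d ^^ Suc j) w) i
         = max (w i + (j + 1) * d i + d i) (w m + j * L + L)"
      using pdiag_funpow_at_top_off[OF m top i False, of j]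
        pdiag_funpow_at_top_off[OF m top i False, of "Suc j"]
      by (simp_all add: algebra_simps)
    show ?thesis
    proof (cases "d i = L")
      case True
      then show ?thesis using off by (simp add: max_add_distrib_right)
    next
      case False
      \<comment> \<open>by now coordinate \<open>i\<close> is governed by the off-diagonal value \<open>w m + j * L\<close>\<close>
      then have "\<delta> \<le> L - d i" using \<delta>(2) d_le_L[OF i] i by force
      then have "j * \<delta> \<le> j * (L - d i)" by (intro mult_left_mono) auto
      then have "w i + (j + 1) * d i \<le> w m + j * L"
        using jL top[rule_format, OF i] \<open>\<delta> \<le> L - d i\<close> \<delta>(1) by (simp add: algebra_simps)
      then show ?thesis using off d_le_L[OF i] by (simp add: max_def)
    qed
  qed
  then show ?thesis by blast
qed

lemma pdiag_eventually_eigen_nonneg: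
  assumes "2 \<le> n" "m < n" "d m = L"
  shows "\<exists>k. \<forall>i<n. pdiag_apply n d ((pdiag_apply n d ^^ k) y) i
                    = mcm n (pdiag d) + (pdiag_apply n d ^^ k) y i"
proof -
  have "Max (d ` {..<n}) = L"
    using assms d_le_L by (intro Max_eqI) auto
  then have mcm: "mcm n (pdiag d) = L"
    using assms(1) L_nonneg by (simp add: mcm_pdiag)
  let ?S = "{i. i < n \<and> d i = L}"
  have "Max (y ` ?S) \<in> y ` ?S" using assms(2,3) by (intro Max_in) auto
  then obtain m' where m': "m' < n" "d m' = L" "y m' = Max (y ` ?S)" by auto
  then have "\<forall>i<n. d i = L \<longrightarrow> y i \<le> y m'" by simp
  then obtain k1 where k1: "\<forall>j<n. (pdiag_apply n d ^^ k1) y j \<le> (pdiag_apply n d ^^ k1) y m'"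
    using pdiag_eventually_top[OF m'(1,2)] by blast
  obtain k2 where "\<forall>i<n. pdiag_apply n d ((pdiag_apply n d ^^ k2) ((pdiag_apply n d ^^ k1) y)) i
      = L + (pdiag_apply n d ^^ k2) ((pdiag_apply n d ^^ k1) y) i"
    using pdiag_eventually_eigen_from_top[OF m'(1,2) k1] by blast
  then show ?thesis
    using mcm by (intro exI[of _ "k2 + k1"]) (simp add: funpow_add)
qed

end

lemma mp_apply_2:
  "mp_apply 2 A x = (\<lambda>i. if i < 2 then max (A i 0 + x 0) (A i 1 + x 1) else -\<infinity>)"
proof -
  have "{..<2::nat} = {0, 1}" by auto
  then show ?thesis by (auto simp: mp_apply_def fun_eq_iff)
qed

lemma mp_vecs_2: "x \<in> mp_vecs 2 \<longleftrightarrow> x 0 \<noteq> \<infinity> \<and> x 1 \<noteq> \<infinity> \<and> (\<forall>i\<ge>2. x i = -\<infinity>)"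
  by (auto simp: mp_vecs_def less_2_cases_iff)

lemma eigenspace_pdiag2_iff:
  assumes "d 0 < 0" "d 1 < 0" "x \<in> mp_vecs 2"
  shows "x \<in> eigenspace 2 (pdiag d) \<longleftrightarrow> x 0 = x 1"
proof -
  have "Max (d ` {..<2}) \<le> 0"
    using assms(1,2) by (subst Max_le_iff) (auto simp: less_2_cases_iff)
  then have "mcm 2 (pdiag d) = 0" by (simp add: mcm_pdiag)
  moreover have "mp_scale 2 0 x = x"
    using assms(3) by (auto simp: mp_scale_def mp_vecs_2 fun_eq_iff)
  moreover have "mp_apply 2 (mp_of_real 2 (pdiag d)) x = x \<longleftrightarrow>
      max (ereal (d 0) + x 0) (x 1) = x 0 \<and> max (x 0) (ereal (d 1) + x 1) = x 1"
    using assms(3) by (auto simp: mp_apply_2 mp_of_real_def pdiag_def fun_eq_iff mp_vecs_2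
        less_2_cases_iff zero_ereal_def)
  moreover have "(max (ereal (d 0) + x 0) (x 1) = x 0 \<and> max (x 0) (ereal (d 1) + x 1) = x 1)
      \<longleftrightarrow> x 0 = x 1"
    using assms by (cases "x 0"; cases "x 1") (auto simp: max_def mp_vecs_2)
  ultimately show ?thesis
    using assms(3) by (simp add: eigenspace_def)
qed

lemma pdiag2_apply_preserves_neq:
  assumes "d 0 < 0" "d 1 < 0" "x \<in> mp_vecs 2" "x 0 \<noteq> x 1"
  shows "mp_apply 2 (mp_of_real 2 (pdiag d)) x \<in> mp_vecs 2
       \<and> mp_apply 2 (mp_of_real 2 (pdiag d)) x 0 \<noteq> mp_apply 2 (mp_of_real 2 (pdiag d)) x 1"
proof -
  have "max (ereal (d 0) + x 0) (x 1) \<noteq> \<infinity> \<and> max (x 0) (ereal (d 1) + x 1) \<noteq> \<infinity>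
        \<and> max (ereal (d 0) + x 0) (x 1) \<noteq> max (x 0) (ereal (d 1) + x 1)"
    using assms by (cases "x 0"; cases "x 1") (auto simp: max_def mp_vecs_2)
  then show ?thesis by (simp add: mp_vecs_2 mp_apply_2 mp_of_real_def pdiag_def)
qed

lemma attr_pdiag2:
  assumes "d 0 < 0" "d 1 < 0"
  shows "attr 2 (pdiag d) = {x \<in> mp_vecs 2. x 0 = x 1}"
proof -
  let ?T = "mp_apply 2 (mp_of_real 2 (pdiag d))"
  have pow: "mp_apply 2 (mp_mat_pow 2 (pdiag d) k) x = (?T ^^ k) x" if "x \<in> mp_vecs 2" for x k
    using that by (intro mp_apply_mp_mat_pow) auto
  have "(?T ^^ k) x \<in> mp_vecs 2 \<and> (?T ^^ k) x 0 \<noteq> (?T ^^ k) x 1"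
    if "x \<in> mp_vecs 2" "x 0 \<noteq> x 1" for x k
    by (induction k) (use that pdiag2_apply_preserves_neq[OF assms] in auto)
  then have "x \<notin> attr 2 (pdiag d)" if "x \<in> mp_vecs 2" "x 0 \<noteq> x 1" for x
    using that pow eigenspace_pdiag2_iff[OF assms] by (auto simp: attr_def)
  moreover have "x \<in> attr 2 (pdiag d)" if "x \<in> mp_vecs 2" "x 0 = x 1" for x
  proof -
    have "mp_apply 2 (mp_mat_pow 2 (pdiag d) 0) x \<in> eigenspace 2 (pdiag d)"
      using that pow[of x 0] eigenspace_pdiag2_iff[OF assms] by simp
    then show ?thesis using that(1) unfolding attr_def by blast
  qed
  ultimately show ?thesis
    by (auto simp: attr_def)
qed

lemma not_strongly_stable_pdiag2:
  assumes "d 0 < 0" "d 1 < 0"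
  shows "\<not> strongly_stable 2 (pdiag d)"
proof -
  have "(\<lambda>i. if i = 0 then 0 else -\<infinity>) \<in> mp_vecs 2 - attr 2 (pdiag d)"
    using assms by (simp add: attr_pdiag2 mp_vecs_def)
  then show ?thesis
    by (auto simp: strongly_stable_def)
qed

lemma strongly_stable_pdiag:
  assumes "2 \<le> n" "3 \<le> n \<or> 0 \<le> Max (d ` {..<n})"
  shows "strongly_stable n (pdiag d)"
proof (rule strongly_stableI)
  show "0 < n" using assms(1) by simp
  have ne: "d ` {..<n} \<noteq> {}" using assms(1) by (auto simp: lessThan_empty_iff)
  fix y
  show "\<exists>k. \<forall>i<n. pdiag_apply n d ((pdiag_apply n d ^^ k) y) i
                = mcm n (pdiag d) + (pdiag_apply n d ^^ k) y i"
  proof (cases "0 \<le> Max (d ` {..<n})")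
    case True
    obtain m where "m < n" "d m = Max (d ` {..<n})"
      using Max_in[OF _ ne] by auto
    with True assms(1) show ?thesis
      by (intro pdiag_eventually_eigen_nonneg[of "Max (d ` {..<n})" n d m]) auto
  next
    case False
    have "d i \<le> 0" if "i < n" for i
    proof -
      have "d i \<le> Max (d ` {..<n})" using that by (intro Max_ge) auto
      with False show ?thesis by linarith
    qed
    moreover have "3 \<le> n" using False assms(2) by simp
    ultimately show ?thesis by (intro pdiag_eventually_eigen_nonpos) auto
  qed
qed

theorem corollary4p9:
  fixes n :: nat and d :: "nat \<Rightarrow> real"
  assumes "n \<ge> 2"
    and "\<forall>i j. i \<le> j \<longrightarrow> j < n \<longrightarrow> d i \<le> d j"
  shows "(n = 2 \<and> d 1 < 0 \<longrightarrow>
            attr n (pdiag d) = {x \<in> mp_vecs n. x 0 = x 1} \<and> \<not> strongly_stable n (pdiag d))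
       \<and> (\<not> (n = 2 \<and> d 1 < 0) \<longrightarrow> strongly_stable n (pdiag d))"
proof (intro conjI impI)
  assume n2: "n = 2 \<and> d 1 < 0"
  with assms(2)[rule_format, of 0 1] have "d 0 < 0" by simp
  with n2 show "attr n (pdiag d) = {x \<in> mp_vecs n. x 0 = x 1}"
    by (simp add: attr_pdiag2)
  from \<open>d 0 < 0\<close> n2 show "\<not> strongly_stable n (pdiag d)"
    by (simp add: not_strongly_stable_pdiag2)
next
  assume not2: "\<not> (n = 2 \<and> d 1 < 0)"
  have "3 \<le> n \<or> 0 \<le> Max (d ` {..<n})"
  proof (cases "n = 2")
    case True
    with not2 have "0 \<le> d 1" by simp
    also have "d 1 \<le> Max (d ` {..<n})" using True by (intro Max_ge) auto
    finally show ?thesis ..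
  qed (use assms(1) in simp)
  with assms(1) show "strongly_stable n (pdiag d)"
    by (rule strongly_stable_pdiag)
qed

end
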